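(* Let $\pi$ be a $k$-simple $\mathbf{LKI}_{\mathcal E}$-proof of a sequent $S$. Then there exists a proof schema with end-sequent $S$.
   Context: **Language.** A two-sorted first-order language with sort $\omega$ (natural numbers) and sort $\iota$. It contains the constant function symbols $0:\omega$ and $s:\omega\to\omega$ (we write $t+1$ for $s(t)$), further uninterpreted ("constant") function and predicate symbols, and defined function and predicate symbols. Each defined function symbol $f:\omega\times\tau_1\times\cdots\times\tau_n\to\tau$ comes with two rewrite rules $f(0,\bar x)\to s$ and $f(s(y),\bar x)\to t[f(y,\bar x)]$, where: - $s$ and $t$ do not contain $f$; - $\mathrm{vars}(s)\subseteq\{\bar x\}$ and $\mathrm{vars}(t)\subseteq\{\bar x,y\}$; - every defined symbol $g$ occurring in $s$ or $t$ satisfies $g\prec f$ for a fixed irreflexive order $\prec$ (primitive recursion). Defined predicate symbols are analogous, with formulas as right-hand sides. $\mathcal E$ denotes these rewrite rules read as equations. **Calculi.** $\mathbf{LK}_{\mathcal E}$ is Gentzen's $\mathbf{LK}$ (sequents are pairs of multisets; axioms $A\vdash A$ with $A$ atomic) extended by the rule: from $S[t]$ infer $S[t']$ whenever $\mathcal E\models t=t'$. For a proof symbol $\varphi$, terms $a_1,\dots,a_m$ and a sequent $S(x_1,\dots,x_m)$, a proof link is $(\varphi(a_1,\dots,a_m))$ written above $S(a_1,\dots,a_m)$. It is a $k$-proof link (for a variable $k:\omega$) if $\mathrm{vars}(a_1)\subseteq\{k\}$. $\mathbf{LKS}_{\mathcal E}$ is $\mathbf{LK}_{\mathcal E}$ in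 which proof links may occur as leaves. **Proof schemata.** A proof schema pair for a proof symbol $\psi$ with sequent $S(n,x_1,\dots,x_m)$ (where $n:\omega$) is a pair $(\pi,\nu(k))$ of $\mathbf{LKS}_{\mathcal E}$-proofs of $S(0,\bar x)$ and $S(k+1,\bar x)$ respectively, such that: - $\pi$ contains no proof links; - $\nu(k)$ contains only proof links of the form $(\psi(k,a_1,\dots,a_m))$ above $S(k,a_1,\dots,a_m)$. A proof schema $\Psi=\langle(\pi_1,\nu_1(k)),\dots,(\pi_\alpha,\nu_\alpha(k))\rangle$ is a tuple of proof schema pairs for proof symbols $\psi_1,\dots,\psi_\alpha$, such that the proofs of the $\beta$-th pair may additionally contain $k$-proof links to $\psi_\gamma$ for $\beta<\gamma$. Its end-sequent is the sequent $S(n,\bar x)$ of $\psi_1$. **Induction.** $\mathbf{LKI}_{\mathcal E}$ is $\mathbf{LK}_{\mathcal E}$ (without proof links) extended by the induction rule: from $A(k),\Gamma\vdash\Delta,A(k+1)$ infer $A(0),\Gamma\vdash\Delta,A(t)$, where $k:\omega$ is a variable not occurring in $\Gamma,\Delta,A(0)$ and $t$ is a term of sort $\omega$. An $\mathbf{LKI}_{\mathcal E}$-proof is $k$-simple if in all its induction inferences the eigenvariable is $k$ and $\mathrm{vars}(t)\subseteq\{k\}$. *)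

theory Defs
  imports Main "HOL-Library.Multiset"
begin

section \<open>Syntax of the two-sorted language\<close>

text \<open>Sorts: SOm is the sort omega (natural numbers), SIo is the sort iota.\<close>
datatype srt = SOm | SIo

type_synonym var = "nat \<times> srt"

text \<open>Terms. TZero and TSuc are the constant symbols 0 and s; TFn applies a
  (constant or defined) function symbol.\<close>
datatype 'f trm = TVar var | TZero | TSuc "'f trm" | TFn 'f "'f trm list"

datatype ('f,'p) fm =
    FAtom 'p "'f trm list"
  | FNeg "('f,'p) fm"
  | FConj "('f,'p) fm" "('f,'p) fm"
  | FDisj "('f,'p) fm" "('f,'p) fm"
  | FImp "('f,'p) fm" "('f,'p) fm"
  | FAll var "('f,'p) fm"
  | FEx var "('f,'p) fm"

type_synonym ('f,'p) seq = "('f,'p) fm multiset \<times> ('f,'p) fm multiset"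

text \<open>A language: sorts of function symbols (argument sorts, result sort), sorts of
  predicate symbols, and for defined symbols their two primitive recursive rewrite rules.
  A rule entry (xs, y, r0, rS) for a function symbol f stands for the rules
  f(0,xs) -> r0 and f(s(y),xs) -> rS, where rS = t[f(y,xs)].  Analogously for predicate
  symbols with formula right-hand sides.  Symbols with no entry are constant
  (uninterpreted) symbols.\<close>
record ('f,'p) lang =
  fsig :: "'f \<Rightarrow> srt list \<times> srt"
  psig :: "'p \<Rightarrow> srt list"
  fdef :: "'f \<Rightarrow> (var list \<times> var \<times> 'f trm \<times> 'f trm) option"
  pdef :: "'p \<Rightarrow> (var list \<times> var \<times> ('f,'p) fm \<times> ('f,'p) fm) option"

fun wt :: "('f,'p,'x) lang_scheme \<Rightarrow> 'f trm \<Rightarrow> srt \<Rightarrow> bool" where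
  "wt L (TVar x) s = (snd x = s)"
| "wt L TZero s = (s = SOm)"
| "wt L (TSuc t) s = (s = SOm \<and> wt L t SOm)"
| "wt L (TFn f ts) s = (snd (fsig L f) = s \<and> list_all2 (wt L) ts (fst (fsig L f)))"

fun wff :: "('f,'p,'x) lang_scheme \<Rightarrow> ('f,'p) fm \<Rightarrow> bool" where
  "wff L (FAtom P ts) = list_all2 (wt L) ts (psig L P)"
| "wff L (FNeg A) = wff L A"
| "wff L (FConj A B) = (wff L A \<and> wff L B)"
| "wff L (FDisj A B) = (wff L A \<and> wff L B)"
| "wff L (FImp A B) = (wff L A \<and> wff L B)"
| "wff L (FAll x A) = wff L A"
| "wff L (FEx x A) = wff L A"

definition wf_seq :: "('f,'p,'x) lang_scheme \<Rightarrow> ('f,'p) seq \<Rightarrow> bool" where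
  "wf_seq L S = (\<forall>A \<in># fst S + snd S. wff L A)"

fun fvt :: "'f trm \<Rightarrow> var set" where
  "fvt (TVar x) = {x}"
| "fvt TZero = {}"
| "fvt (TSuc t) = fvt t"
| "fvt (TFn f ts) = (\<Union>t\<in>set ts. fvt t)"

fun fvf :: "('f,'p) fm \<Rightarrow> var set" where
  "fvf (FAtom P ts) = (\<Union>t\<in>set ts. fvt t)"
| "fvf (FNeg A) = fvf A"
| "fvf (FConj A B) = fvf A \<union> fvf B"
| "fvf (FDisj A B) = fvf A \<union> fvf B"
| "fvf (FImp A B) = fvf A \<union> fvf B"
| "fvf (FAll x A) = fvf A - {x}"
| "fvf (FEx x A) = fvf A - {x}"

definition fv_seq :: "('f,'p) seq \<Rightarrow> var set" where
  "fv_seq S = (\<Union>A \<in> set_mset (fst S + snd S). fvf A)"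

fun fsyms :: "'f trm \<Rightarrow> 'f set" where
  "fsyms (TVar x) = {}"
| "fsyms TZero = {}"
| "fsyms (TSuc t) = fsyms t"
| "fsyms (TFn f ts) = insert f (\<Union>t\<in>set ts. fsyms t)"

fun fsyms_f :: "('f,'p) fm \<Rightarrow> 'f set" where
  "fsyms_f (FAtom P ts) = (\<Union>t\<in>set ts. fsyms t)"
| "fsyms_f (FNeg A) = fsyms_f A"
| "fsyms_f (FConj A B) = fsyms_f A \<union> fsyms_f B"
| "fsyms_f (FDisj A B) = fsyms_f A \<union> fsyms_f B"
| "fsyms_f (FImp A B) = fsyms_f A \<union> fsyms_f B"
| "fsyms_f (FAll x A) = fsyms_f A"
| "fsyms_f (FEx x A) = fsyms_f A"

fun psyms :: "('f,'p) fm \<Rightarrow> 'p set" where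
  "psyms (FAtom P ts) = {P}"
| "psyms (FNeg A) = psyms A"
| "psyms (FConj A B) = psyms A \<union> psyms B"
| "psyms (FDisj A B) = psyms A \<union> psyms B"
| "psyms (FImp A B) = psyms A \<union> psyms B"
| "psyms (FAll x A) = psyms A"
| "psyms (FEx x A) = psyms A"

text \<open>Every occurrence of f in the term is exactly f(as) (the hole of a context t[f(as)]).\<close>
fun hole_only_t :: "'f \<Rightarrow> 'f trm list \<Rightarrow> 'f trm \<Rightarrow> bool" where
  "hole_only_t f as (TVar x) = True"
| "hole_only_t f as TZero = True"
| "hole_only_t f as (TSuc t) = hole_only_t f as t"
| "hole_only_t f as (TFn g ts) = (if g = f then ts = as else (\<forall>t\<in>set ts. hole_only_t f as t))"

fun hole_only_f :: "'p \<Rightarrow> 'f trm list \<Rightarrow> ('f,'p) fm \<Rightarrow> bool" where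
  "hole_only_f P as (FAtom Q ts) = (Q = P \<longrightarrow> ts = as)"
| "hole_only_f P as (FNeg A) = hole_only_f P as A"
| "hole_only_f P as (FConj A B) = (hole_only_f P as A \<and> hole_only_f P as B)"
| "hole_only_f P as (FDisj A B) = (hole_only_f P as A \<and> hole_only_f P as B)"
| "hole_only_f P as (FImp A B) = (hole_only_f P as A \<and> hole_only_f P as B)"
| "hole_only_f P as (FAll x A) = hole_only_f P as A"
| "hole_only_f P as (FEx x A) = hole_only_f P as A"

definition dsyms_t :: "('f,'p,'x) lang_scheme \<Rightarrow> 'f trm \<Rightarrow> ('f + 'p) set" where
  "dsyms_t L t = Inl ` {f \<in> fsyms t. fdef L f \<noteq> None}"

definition dsyms_f :: "('f,'p,'x) lang_scheme \<Rightarrow> ('f,'p) fm \<Rightarrow> ('f + 'p) set" where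
  "dsyms_f L A = Inl ` {f \<in> fsyms_f A. fdef L f \<noteq> None} \<union> Inr ` {P \<in> psyms A. pdef L P \<noteq> None}"

text \<open>Well-formedness of the defined symbols: the primitive recursion scheme.\<close>
definition wf_lang :: "('f,'p,'x) lang_scheme \<Rightarrow> bool" where
  "wf_lang L \<longleftrightarrow>
    (\<forall>f xs y r0 rS. fdef L f = Some (xs, y, r0, rS) \<longrightarrow>
        distinct (y # xs) \<and> snd y = SOm \<and> fst (fsig L f) = SOm # map snd xs
      \<and> wt L r0 (snd (fsig L f)) \<and> wt L rS (snd (fsig L f))
      \<and> fvt r0 \<subseteq> set xs \<and> fvt rS \<subseteq> set (y # xs)
      \<and> f \<notin> fsyms r0 \<and> hole_only_t f (TVar y # map TVar xs) rS)
  \<and> (\<forall>P xs y A0 AS. pdef L P = Some (xs, y, A0, AS) \<longrightarrow>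
        distinct (y # xs) \<and> snd y = SOm \<and> psig L P = SOm # map snd xs
      \<and> wff L A0 \<and> wff L AS
      \<and> fvf A0 \<subseteq> set xs \<and> fvf AS \<subseteq> set (y # xs)
      \<and> P \<notin> psyms A0 \<and> hole_only_f P (TVar y # map TVar xs) AS)
  \<and> (\<exists>R :: ('f + 'p) rel. irrefl R \<and> trans R
      \<and> (\<forall>f xs y r0 rS. fdef L f = Some (xs, y, r0, rS) \<longrightarrow>
           (\<forall>g \<in> dsyms_t L r0 \<union> dsyms_t L rS. g \<noteq> Inl f \<longrightarrow> (g, Inl f) \<in> R))
      \<and> (\<forall>P xs y A0 AS. pdef L P = Some (xs, y, A0, AS) \<longrightarrow>
           (\<forall>g \<in> dsyms_f L A0 \<union> dsyms_f L AS. g \<noteq> Inr P \<longrightarrow> (g, Inr P) \<in> R)))"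

fun subt :: "(var \<Rightarrow> 'f trm) \<Rightarrow> 'f trm \<Rightarrow> 'f trm" where
  "subt \<sigma> (TVar x) = \<sigma> x"
| "subt \<sigma> TZero = TZero"
| "subt \<sigma> (TSuc t) = TSuc (subt \<sigma> t)"
| "subt \<sigma> (TFn f ts) = TFn f (map (subt \<sigma>) ts)"

fun subf :: "(var \<Rightarrow> 'f trm) \<Rightarrow> ('f,'p) fm \<Rightarrow> ('f,'p) fm" where
  "subf \<sigma> (FAtom P ts) = FAtom P (map (subt \<sigma>) ts)"
| "subf \<sigma> (FNeg A) = FNeg (subf \<sigma> A)"
| "subf \<sigma> (FConj A B) = FConj (subf \<sigma> A) (subf \<sigma> B)"
| "subf \<sigma> (FDisj A B) = FDisj (subf \<sigma> A) (subf \<sigma> B)"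
| "subf \<sigma> (FImp A B) = FImp (subf \<sigma> A) (subf \<sigma> B)"
| "subf \<sigma> (FAll x A) = FAll x (subf (\<sigma>(x := TVar x)) A)"
| "subf \<sigma> (FEx x A) = FEx x (subf (\<sigma>(x := TVar x)) A)"

fun freefor :: "(var \<Rightarrow> 'f trm) \<Rightarrow> ('f,'p) fm \<Rightarrow> bool" where
  "freefor \<sigma> (FAtom P ts) = True"
| "freefor \<sigma> (FNeg A) = freefor \<sigma> A"
| "freefor \<sigma> (FConj A B) = (freefor \<sigma> A \<and> freefor \<sigma> B)"
| "freefor \<sigma> (FDisj A B) = (freefor \<sigma> A \<and> freefor \<sigma> B)"
| "freefor \<sigma> (FImp A B) = (freefor \<sigma> A \<and> freefor \<sigma> B)"
| "freefor \<sigma> (FAll x A) = ((\<forall>y \<in> fvf (FAll x A). x \<notin> fvt (\<sigma> y)) \<and> freefor (\<sigma>(x := TVar x)) A)"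
| "freefor \<sigma> (FEx x A) = ((\<forall>y \<in> fvf (FEx x A). x \<notin> fvt (\<sigma> y)) \<and> freefor (\<sigma>(x := TVar x)) A)"

definition subs :: "(var \<Rightarrow> 'f trm) \<Rightarrow> ('f,'p) seq \<Rightarrow> ('f,'p) seq" where
  "subs \<sigma> S = (image_mset (subf \<sigma>) (fst S), image_mset (subf \<sigma>) (snd S))"

definition freefor_seq :: "(var \<Rightarrow> 'f trm) \<Rightarrow> ('f,'p) seq \<Rightarrow> bool" where
  "freefor_seq \<sigma> S = (\<forall>A \<in># fst S + snd S. freefor \<sigma> A)"

definition subst_of :: "var list \<Rightarrow> 'f trm list \<Rightarrow> var \<Rightarrow> 'f trm" where
  "subst_of ps as x = (case map_of (zip ps as) x of Some t \<Rightarrow> t | None \<Rightarrow> TVar x)"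

section \<open>Semantics and the equational theory E\<close>

text \<open>Two-sorted structures; the carriers of both sorts are nonempty subsets of a fixed
  countably infinite universe (nat).\<close>
record ('f,'p) struc =
  sdom :: "srt \<Rightarrow> nat set"
  szero :: nat
  ssuc :: "nat \<Rightarrow> nat"
  sfun :: "'f \<Rightarrow> nat list \<Rightarrow> nat"
  spred :: "'p \<Rightarrow> nat list \<Rightarrow> bool"

definition is_struc :: "('f,'p,'x) lang_scheme \<Rightarrow> ('f,'p,'y) struc_scheme \<Rightarrow> bool" where
  "is_struc L M \<longleftrightarrow> (\<forall>s. sdom M s \<noteq> {}) \<and> szero M \<in> sdom M SOm
    \<and> (\<forall>d \<in> sdom M SOm. ssuc M d \<in> sdom M SOm)
    \<and> (\<forall>f ds. list_all2 (\<lambda>d s. d \<in> sdom M s) ds (fst (fsig L f))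
              \<longrightarrow> sfun M f ds \<in> sdom M (snd (fsig L f)))"

definition is_val :: "('f,'p,'y) struc_scheme \<Rightarrow> (var \<Rightarrow> nat) \<Rightarrow> bool" where
  "is_val M v \<longleftrightarrow> (\<forall>x. v x \<in> sdom M (snd x))"

fun evalt :: "('f,'p,'y) struc_scheme \<Rightarrow> (var \<Rightarrow> nat) \<Rightarrow> 'f trm \<Rightarrow> nat" where
  "evalt M v (TVar x) = v x"
| "evalt M v TZero = szero M"
| "evalt M v (TSuc t) = ssuc M (evalt M v t)"
| "evalt M v (TFn f ts) = sfun M f (map (evalt M v) ts)"

fun sat :: "('f,'p,'y) struc_scheme \<Rightarrow> (var \<Rightarrow> nat) \<Rightarrow> ('f,'p) fm \<Rightarrow> bool" where
  "sat M v (FAtom P ts) = spred M P (map (evalt M v) ts)"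
| "sat M v (FNeg A) = (\<not> sat M v A)"
| "sat M v (FConj A B) = (sat M v A \<and> sat M v B)"
| "sat M v (FDisj A B) = (sat M v A \<or> sat M v B)"
| "sat M v (FImp A B) = (sat M v A \<longrightarrow> sat M v B)"
| "sat M v (FAll x A) = (\<forall>d \<in> sdom M (snd x). sat M (v(x := d)) A)"
| "sat M v (FEx x A) = (\<exists>d \<in> sdom M (snd x). sat M (v(x := d)) A)"

definition models_E :: "('f,'p,'x) lang_scheme \<Rightarrow> ('f,'p,'y) struc_scheme \<Rightarrow> bool" where
  "models_E L M \<longleftrightarrow> (\<forall>v. is_val M v \<longrightarrow>
     (\<forall>f xs y r0 rS. fdef L f = Some (xs, y, r0, rS) \<longrightarrow>
        evalt M v (TFn f (TZero # map TVar xs)) = evalt M v r0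
      \<and> evalt M v (TFn f (TSuc (TVar y) # map TVar xs)) = evalt M v rS)
   \<and> (\<forall>P xs y A0 AS. pdef L P = Some (xs, y, A0, AS) \<longrightarrow>
        (sat M v (FAtom P (TZero # map TVar xs)) \<longleftrightarrow> sat M v A0)
      \<and> (sat M v (FAtom P (TSuc (TVar y) # map TVar xs)) \<longleftrightarrow> sat M v AS)))"

definition E_eq :: "('f,'p,'x) lang_scheme \<Rightarrow> 'f trm \<Rightarrow> 'f trm \<Rightarrow> bool" where
  "E_eq L t t' \<longleftrightarrow> (\<forall>(M :: ('f,'p) struc) v. is_struc L M \<and> models_E L M \<and> is_val M v
      \<longrightarrow> evalt M v t = evalt M v t')"

definition E_iff :: "('f,'p,'x) lang_scheme \<Rightarrow> ('f,'p) fm \<Rightarrow> ('f,'p) fm \<Rightarrow> bool" where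
  "E_iff L A A' \<longleftrightarrow> (\<forall>(M :: ('f,'p) struc) v. is_struc L M \<and> models_E L M \<and> is_val M v
      \<longrightarrow> (sat M v A \<longleftrightarrow> sat M v A'))"

inductive repl_t :: "'f trm \<Rightarrow> 'f trm \<Rightarrow> 'f trm \<Rightarrow> 'f trm \<Rightarrow> bool" for t t' where
  rt_refl: "repl_t t t' u u"
| rt_hit: "repl_t t t' t t'"
| rt_suc: "repl_t t t' u u' \<Longrightarrow> repl_t t t' (TSuc u) (TSuc u')"
| rt_fn: "list_all2 (repl_t t t') us us' \<Longrightarrow> repl_t t t' (TFn f us) (TFn f us')"

inductive repl_tf :: "'f trm \<Rightarrow> 'f trm \<Rightarrow> ('f,'p) fm \<Rightarrow> ('f,'p) fm \<Rightarrow> bool" for t t' where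
  rtf_atom: "list_all2 (repl_t t t') us us' \<Longrightarrow> repl_tf t t' (FAtom P us) (FAtom P us')"
| rtf_neg: "repl_tf t t' A A' \<Longrightarrow> repl_tf t t' (FNeg A) (FNeg A')"
| rtf_conj: "repl_tf t t' A A' \<Longrightarrow> repl_tf t t' B B' \<Longrightarrow> repl_tf t t' (FConj A B) (FConj A' B')"
| rtf_disj: "repl_tf t t' A A' \<Longrightarrow> repl_tf t t' B B' \<Longrightarrow> repl_tf t t' (FDisj A B) (FDisj A' B')"
| rtf_imp: "repl_tf t t' A A' \<Longrightarrow> repl_tf t t' B B' \<Longrightarrow> repl_tf t t' (FImp A B) (FImp A' B')"
| rtf_all: "repl_tf t t' A A' \<Longrightarrow> repl_tf t t' (FAll x A) (FAll x A')"
| rtf_ex: "repl_tf t t' A A' \<Longrightarrow> repl_tf t t' (FEx x A) (FEx x A')"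

inductive repl_ff :: "('f,'p) fm \<Rightarrow> ('f,'p) fm \<Rightarrow> ('f,'p) fm \<Rightarrow> ('f,'p) fm \<Rightarrow> bool" for B B' where
  rff_refl: "repl_ff B B' A A"
| rff_hit: "repl_ff B B' B B'"
| rff_neg: "repl_ff B B' A A' \<Longrightarrow> repl_ff B B' (FNeg A) (FNeg A')"
| rff_conj: "repl_ff B B' A A' \<Longrightarrow> repl_ff B B' C C' \<Longrightarrow> repl_ff B B' (FConj A C) (FConj A' C')"
| rff_disj: "repl_ff B B' A A' \<Longrightarrow> repl_ff B B' C C' \<Longrightarrow> repl_ff B B' (FDisj A C) (FDisj A' C')"
| rff_imp: "repl_ff B B' A A' \<Longrightarrow> repl_ff B B' C C' \<Longrightarrow> repl_ff B B' (FImp A C) (FImp A' C')"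
| rff_all: "repl_ff B B' A A' \<Longrightarrow> repl_ff B B' (FAll x A) (FAll x A')"
| rff_ex: "repl_ff B B' A A' \<Longrightarrow> repl_ff B B' (FEx x A) (FEx x A')"

section \<open>The calculus LK_E\<close>

fun is_atom :: "('f,'p) fm \<Rightarrow> bool" where
  "is_atom (FAtom P ts) = True"
| "is_atom _ = False"

inductive lk_rule :: "('f,'p,'x) lang_scheme \<Rightarrow> ('f,'p) seq list \<Rightarrow> ('f,'p) seq \<Rightarrow> bool"
  for L where
  ax: "is_atom A \<Longrightarrow> lk_rule L [] ({#A#}, {#A#})"
| wl: "lk_rule L [(G, D)] (add_mset A G, D)"
| wr: "lk_rule L [(G, D)] (G, add_mset A D)"
| cl: "lk_rule L [(add_mset A (add_mset A G), D)] (add_mset A G, D)"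
| cr: "lk_rule L [(G, add_mset A (add_mset A D))] (G, add_mset A D)"
| cut: "lk_rule L [(G, add_mset A D), (add_mset A G', D')] (G + G', D + D')"
| negl: "lk_rule L [(G, add_mset A D)] (add_mset (FNeg A) G, D)"
| negr: "lk_rule L [(add_mset A G, D)] (G, add_mset (FNeg A) D)"
| conjl1: "lk_rule L [(add_mset A G, D)] (add_mset (FConj A B) G, D)"
| conjl2: "lk_rule L [(add_mset B G, D)] (add_mset (FConj A B) G, D)"
| conjr: "lk_rule L [(G, add_mset A D), (G, add_mset B D)] (G, add_mset (FConj A B) D)"
| disjl: "lk_rule L [(add_mset A G, D), (add_mset B G, D)] (add_mset (FDisj A B) G, D)"
| disjr1: "lk_rule L [(G, add_mset A D)] (G, add_mset (FDisj A B) D)"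
| disjr2: "lk_rule L [(G, add_mset B D)] (G, add_mset (FDisj A B) D)"
| impl: "lk_rule L [(G, add_mset A D), (add_mset B G', D')] (add_mset (FImp A B) (G + G'), D + D')"
| impr: "lk_rule L [(add_mset A G, add_mset B D)] (G, add_mset (FImp A B) D)"
| alll: "wt L t (snd x) \<Longrightarrow> freefor (TVar(x := t)) A \<Longrightarrow>
         lk_rule L [(add_mset (subf (TVar(x := t)) A) G, D)] (add_mset (FAll x A) G, D)"
| allr: "snd a = snd x \<Longrightarrow> freefor (TVar(x := TVar a)) A \<Longrightarrow>
         a \<notin> fv_seq (G, D) \<Longrightarrow> a \<notin> fvf (FAll x A) \<Longrightarrow>
         lk_rule L [(G, add_mset (subf (TVar(x := TVar a)) A) D)] (G, add_mset (FAll x A) D)"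
| exl: "snd a = snd x \<Longrightarrow> freefor (TVar(x := TVar a)) A \<Longrightarrow>
         a \<notin> fv_seq (G, D) \<Longrightarrow> a \<notin> fvf (FEx x A) \<Longrightarrow>
         lk_rule L [(add_mset (subf (TVar(x := TVar a)) A) G, D)] (add_mset (FEx x A) G, D)"
| exr: "wt L t (snd x) \<Longrightarrow> freefor (TVar(x := t)) A \<Longrightarrow>
         lk_rule L [(G, add_mset (subf (TVar(x := t)) A) D)] (G, add_mset (FEx x A) D)"
| eqt: "wt L t s \<Longrightarrow> wt L t' s \<Longrightarrow> E_eq L t t' \<Longrightarrow>
         rel_mset (repl_tf t t') G G' \<Longrightarrow> rel_mset (repl_tf t t') D D' \<Longrightarrow>
         lk_rule L [(G, D)] (G', D')"
| eqf: "E_iff L B B' \<Longrightarrow>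
         rel_mset (repl_ff B B') G G' \<Longrightarrow> rel_mset (repl_ff B B') D D' \<Longrightarrow>
         lk_rule L [(G, D)] (G', D')"

text \<open>The induction rule with eigenvariable k and term t:
  from A(k), G |- D, A(k+1) infer A(0), G |- D, A(t).  The formula A(k) is represented
  by A itself, A(u) by the substitution of u for k.\<close>
definition ind_rule :: "('f,'p,'x) lang_scheme \<Rightarrow> var \<Rightarrow> 'f trm \<Rightarrow> ('f,'p) seq list \<Rightarrow> ('f,'p) seq \<Rightarrow> bool" where
  "ind_rule L k t Ps C \<longleftrightarrow> (\<exists>A G D.
      snd k = SOm \<and> wt L t SOm
    \<and> k \<notin> fv_seq (G, D) \<and> k \<notin> fvf (subf (TVar(k := TZero)) A)
    \<and> freefor (TVar(k := TSuc (TVar k))) A \<and> freefor (TVar(k := t)) A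
    \<and> Ps = [(add_mset A G, add_mset (subf (TVar(k := TSuc (TVar k))) A) D)]
    \<and> C = (add_mset (subf (TVar(k := TZero)) A) G, add_mset (subf (TVar(k := t)) A) D))"

text \<open>Proof trees: an inference node labelled with its conclusion and its subproofs, or a
  proof-link leaf (proof symbol, argument terms, the sequent written below the link).\<close>
datatype ('f,'p) ptree =
    Inf "('f,'p) seq" "('f,'p) ptree list"
  | Lnk nat "'f trm list" "('f,'p) seq"

fun endseq :: "('f,'p) ptree \<Rightarrow> ('f,'p) seq" where
  "endseq (Inf S ps) = S"
| "endseq (Lnk j as S) = S"

text \<open>LKS_E proofs; lok decides which proof links are admissible.\<close>
fun lks_proof :: "('f,'p,'x) lang_scheme \<Rightarrow> (nat \<Rightarrow> 'f trm list \<Rightarrow> ('f,'p) seq \<Rightarrow> bool)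
    \<Rightarrow> ('f,'p) ptree \<Rightarrow> bool" where
  "lks_proof L lok (Inf S ps) =
     (wf_seq L S \<and> lk_rule L (map endseq ps) S \<and> (\<forall>p \<in> set ps. lks_proof L lok p))"
| "lks_proof L lok (Lnk j as S) = (wf_seq L S \<and> lok j as S)"

text \<open>LKI_E proofs (no links); Q restricts eigenvariable and term of induction inferences.\<close>
fun lki_proof :: "('f,'p,'x) lang_scheme \<Rightarrow> (var \<Rightarrow> 'f trm \<Rightarrow> bool) \<Rightarrow> ('f,'p) ptree \<Rightarrow> bool" where
  "lki_proof L Q (Inf S ps) =
     (wf_seq L S
      \<and> (lk_rule L (map endseq ps) S \<or> (\<exists>k t. Q k t \<and> ind_rule L k t (map endseq ps) S))
      \<and> (\<forall>p \<in> set ps. lki_proof L Q p))"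
| "lki_proof L Q (Lnk j as S) = False"

definition ksimple_proof :: "('f,'p,'x) lang_scheme \<Rightarrow> var \<Rightarrow> ('f,'p) ptree \<Rightarrow> bool" where
  "ksimple_proof L k p \<longleftrightarrow> lki_proof L (\<lambda>k' t. k' = k \<and> fvt t \<subseteq> {k}) p"

section \<open>Proof schemata\<close>

text \<open>A proof schema is a list of entries; the i-th entry belongs to the proof symbol i and
  consists of the parameter list (n # xs), the sequent S(n, xs), the proof pi of S(0, xs)
  and the proof nu(k) of S(k+1, xs).\<close>
type_synonym ('f,'p) schema = "(var list \<times> ('f,'p) seq \<times> ('f,'p) ptree \<times> ('f,'p) ptree) list"

definition ps_params :: "('f,'p) schema \<Rightarrow> nat \<Rightarrow> var list" where
  "ps_params \<Psi> j = fst (\<Psi> ! j)"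

definition ps_seq :: "('f,'p) schema \<Rightarrow> nat \<Rightarrow> ('f,'p) seq" where
  "ps_seq \<Psi> j = fst (snd (\<Psi> ! j))"

definition ps_base :: "('f,'p) schema \<Rightarrow> nat \<Rightarrow> ('f,'p) ptree" where
  "ps_base \<Psi> j = fst (snd (snd (\<Psi> ! j)))"

definition ps_step :: "('f,'p) schema \<Rightarrow> nat \<Rightarrow> ('f,'p) ptree" where
  "ps_step \<Psi> j = snd (snd (snd (\<Psi> ! j)))"

definition link_ok :: "('f,'p,'x) lang_scheme \<Rightarrow> ('f,'p) schema \<Rightarrow> nat \<Rightarrow> 'f trm list
    \<Rightarrow> ('f,'p) seq \<Rightarrow> bool" where
  "link_ok L \<Psi> j as S' \<longleftrightarrow> j < length \<Psi>
     \<and> list_all2 (\<lambda>a p. wt L a (snd p)) as (ps_params \<Psi> j)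
     \<and> freefor_seq (subst_of (ps_params \<Psi> j) as) (ps_seq \<Psi> j)
     \<and> S' = subs (subst_of (ps_params \<Psi> j) as) (ps_seq \<Psi> j)"

definition k_link :: "var \<Rightarrow> 'f trm list \<Rightarrow> bool" where
  "k_link k as \<longleftrightarrow> as \<noteq> [] \<and> fvt (hd as) \<subseteq> {k}"

definition pair_ok :: "('f,'p,'x) lang_scheme \<Rightarrow> var \<Rightarrow> ('f,'p) schema \<Rightarrow> nat \<Rightarrow> bool" where
  "pair_ok L k \<Psi> i \<longleftrightarrow>
    (let ps = ps_params \<Psi> i; S = ps_seq \<Psi> i; n = hd ps in
       ps \<noteq> [] \<and> distinct ps \<and> snd n = SOm \<and> fv_seq S \<subseteq> set ps
     \<and> lks_proof L (\<lambda>j as S'. i < j \<and> k_link k as \<and> link_ok L \<Psi> j as S') (ps_base \<Psi> i)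
     \<and> endseq (ps_base \<Psi> i) = subs (TVar(n := TZero)) S
     \<and> lks_proof L (\<lambda>j as S'. ((j = i \<and> as \<noteq> [] \<and> hd as = TVar k) \<or> (i < j \<and> k_link k as))
                              \<and> link_ok L \<Psi> j as S') (ps_step \<Psi> i)
     \<and> freefor_seq (TVar(n := TSuc (TVar k))) S
     \<and> endseq (ps_step \<Psi> i) = subs (TVar(n := TSuc (TVar k))) S)"

definition proof_schema :: "('f,'p,'x) lang_scheme \<Rightarrow> var \<Rightarrow> ('f,'p) schema \<Rightarrow> bool" where
  "proof_schema L k \<Psi> \<longleftrightarrow> \<Psi> \<noteq> [] \<and> snd k = SOm \<and> (\<forall>i < length \<Psi>. pair_ok L k \<Psi> i)"

definition schema_endseq :: "('f,'p) schema \<Rightarrow> ('f,'p) seq" where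
  "schema_endseq \<Psi> = ps_seq \<Psi> 0"

end

theory Submission
  imports Defs
begin

text \<open>List the induction inferences of \<open>\<pi>\<close> in preorder.  An inference from
  \<open>A(k), \<Gamma> \<turnstile> \<Delta>, A(k+1)\<close> to \<open>A(0), \<Gamma> \<turnstile> \<Delta>, A(t)\<close> becomes a proof symbol \<open>\<psi>\<close> with
  sequent \<open>A(0), \<Gamma> \<turnstile> \<Delta>, A(n)\<close>: its base case \<open>A(0), \<Gamma> \<turnstile> \<Delta>, A(0)\<close> is an initial sequent
  up to weakening, and its step case cuts the link \<open>\<psi>(k)\<close> against the premise.  Proofs are
  translated by replacing every induction inference by the link \<open>\<psi>(t, xs)\<close>; this is a
  \<open>k\<close>-proof link because \<open>\<pi>\<close> is \<open>k\<close>-simple, and it points forward because the subproofs of an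
  inference come after it in preorder.  The first proof symbol carries the end-sequent with a
  dummy parameter: its base case is the translation of \<open>\<pi>\<close>, its step case a link to itself.\<close>

lemma subt_id_on_fvt: "\<forall>x\<in>fvt t. \<sigma> x = TVar x \<Longrightarrow> subt \<sigma> t = t"
  by (induction t) (auto intro: map_idI)

lemma subf_id_on_fvf: "\<forall>x\<in>fvf A. \<sigma> x = TVar x \<Longrightarrow> subf \<sigma> A = A"
  by (induction A arbitrary: \<sigma>) (auto simp: subt_id_on_fvt intro!: map_idI)

lemma freefor_id_on_fvf: "\<forall>x\<in>fvf A. \<sigma> x = TVar x \<Longrightarrow> freefor \<sigma> A"
  by (induction A arbitrary: \<sigma>) auto

lemma subf_TVar [simp]: "subf TVar A = A"
  by (simp add: subf_id_on_fvf)

lemma freefor_TVar [simp]: "freefor TVar A"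
  by (simp add: freefor_id_on_fvf)

lemma image_mset_subf_id: "\<forall>A\<in>#G. subf \<sigma> A = A \<Longrightarrow> image_mset (subf \<sigma>) G = G"
  by (induction G) auto

lemma subs_id_on_fv_seq: "\<forall>x\<in>fv_seq S. \<sigma> x = TVar x \<Longrightarrow> subs \<sigma> S = S"
  by (cases S) (auto simp: subs_def fv_seq_def intro!: image_mset_subf_id subf_id_on_fvf)

lemma freefor_seq_id_on_fv_seq: "\<forall>x\<in>fv_seq S. \<sigma> x = TVar x \<Longrightarrow> freefor_seq \<sigma> S"
  by (cases S) (auto simp: freefor_seq_def fv_seq_def intro!: freefor_id_on_fvf)

lemma subs_TVar [simp]: "subs TVar S = S"
  by (simp add: subs_id_on_fv_seq)

lemma freefor_seq_TVar [simp]: "freefor_seq TVar S"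
  by (simp add: freefor_seq_id_on_fv_seq)

lemma finite_fvt [simp]: "finite (fvt t)"
  by (induction t) auto

lemma finite_fvf [simp]: "finite (fvf A)"
  by (induction A) auto

lemma finite_fv_seq [simp]: "finite (fv_seq S)"
  by (auto simp: fv_seq_def)

lemma ex_fresh_var: "finite (V :: var set) \<Longrightarrow> \<exists>x. snd x = s \<and> x \<notin> V"
proof -
  assume "finite V"
  then obtain a where "a \<notin> fst ` V"
    using ex_new_if_finite[OF infinite_UNIV_nat finite_imageI[OF \<open>finite V\<close>, of fst]] by blast
  then show ?thesis
    by (intro exI[of _ "(a, s)"]) (auto simp: image_iff)
qed

definition var_list :: "var set \<Rightarrow> var list" where
  "var_list V = (SOME xs. distinct xs \<and> set xs = V)"

lemma var_list: "finite V \<Longrightarrow> distinct (var_list V) \<and> set (var_list V) = V"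
  unfolding var_list_def by (rule someI_ex) (use finite_distinct_list in blast)

lemma map_of_zip_TVar: "map_of (zip xs (map TVar xs)) x = (if x \<in> set xs then Some (TVar x) else None)"
  by (induction xs) auto

lemma subst_of_Cons_TVars: "n \<notin> set xs \<Longrightarrow> subst_of (n # xs) (u # map TVar xs) = TVar(n := u)"
  by (rule ext) (auto simp: subst_of_def map_of_zip_TVar)

lemma wt_map_TVar: "list_all2 (\<lambda>a p. wt L a (snd p)) (map TVar xs) xs"
  by (induction xs) auto

section \<open>Derivability in LKS\<close>

definition lks_derivable :: "('f,'p,'x) lang_scheme \<Rightarrow> (nat \<Rightarrow> 'f trm list \<Rightarrow> ('f,'p) seq \<Rightarrow> bool)
    \<Rightarrow> ('f,'p) seq \<Rightarrow> bool" where
  "lks_derivable L lok S \<longleftrightarrow> (\<exists>p. lks_proof L lok p \<and> endseq p = S)"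

lemma wf_seq_iff: "wf_seq L (G, D) \<longleftrightarrow> (\<forall>A\<in>#G. wff L A) \<and> (\<forall>A\<in>#D. wff L A)"
  by (auto simp: wf_seq_def)

lemma lks_derivable_rule:
  assumes "lk_rule L Ss C" "wf_seq L C" "\<forall>S\<in>set Ss. lks_derivable L lok S"
  shows "lks_derivable L lok C"
proof -
  obtain w where w: "\<forall>S\<in>set Ss. lks_proof L lok (w S) \<and> endseq (w S) = S"
    using bchoice[OF assms(3)[unfolded lks_derivable_def]] by blast
  then have "map endseq (map w Ss) = Ss"
    by (induction Ss) auto
  with w show ?thesis
    unfolding lks_derivable_def using assms(1,2) by (intro exI[of _ "Inf C (map w Ss)"]) auto
qed

lemma lks_derivable_link: "wf_seq L S \<Longrightarrow> lok j as S \<Longrightarrow> lks_derivable L lok S"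
  unfolding lks_derivable_def by (intro exI[of _ "Lnk j as S"]) auto

lemma lks_proof_mono:
  "lks_proof L lok p \<Longrightarrow> (\<And>j as S. lok j as S \<Longrightarrow> lok' j as S) \<Longrightarrow> lks_proof L lok' p"
  by (induction p) auto

lemma lks_derivable_mono:
  "lks_derivable L lok S \<Longrightarrow> (\<And>j as S. lok j as S \<Longrightarrow> lok' j as S) \<Longrightarrow> lks_derivable L lok' S"
  unfolding lks_derivable_def using lks_proof_mono by blast

lemma lks_derivable_identity: "wff L A \<Longrightarrow> lks_derivable L lok ({#A#}, {#A#})"
proof (induction A)
  case (FAtom P ts)
  show ?case
    by (rule lks_derivable_rule[OF lk_rule.ax]) (use FAtom in \<open>auto simp: wf_seq_iff\<close>)
next
  case (FNeg B)
  have "lks_derivable L lok ({#}, {#FNeg B, B#})"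
    by (rule lks_derivable_rule[OF lk_rule.negr[where A=B and G="{#}" and D="{#B#}"]])
       (use FNeg in \<open>auto simp: wf_seq_iff\<close>)
  then show ?case
    by (intro lks_derivable_rule[OF lk_rule.negl[where A=B and G="{#}" and D="{#FNeg B#}"]])
       (use FNeg in \<open>auto simp: wf_seq_iff add_mset_commute\<close>)
next
  case (FConj A B)
  have "lks_derivable L lok ({#FConj A B#}, {#A#})"
    by (rule lks_derivable_rule[OF lk_rule.conjl1[where G="{#}"]]) (use FConj in \<open>auto simp: wf_seq_iff\<close>)
  moreover have "lks_derivable L lok ({#FConj A B#}, {#B#})"
    by (rule lks_derivable_rule[OF lk_rule.conjl2[where G="{#}"]]) (use FConj in \<open>auto simp: wf_seq_iff\<close>)
  ultimately show ?case
    by (intro lks_derivable_rule[OF lk_rule.conjr[where G="{#FConj A B#}" and D="{#}"]])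
       (use FConj in \<open>auto simp: wf_seq_iff\<close>)
next
  case (FDisj A B)
  have "lks_derivable L lok ({#A#}, {#FDisj A B#})"
    by (rule lks_derivable_rule[OF lk_rule.disjr1[where D="{#}"]]) (use FDisj in \<open>auto simp: wf_seq_iff\<close>)
  moreover have "lks_derivable L lok ({#B#}, {#FDisj A B#})"
    by (rule lks_derivable_rule[OF lk_rule.disjr2[where D="{#}"]]) (use FDisj in \<open>auto simp: wf_seq_iff\<close>)
  ultimately show ?case
    by (intro lks_derivable_rule[OF lk_rule.disjl[where G="{#}" and D="{#FDisj A B#}"]])
       (use FDisj in \<open>auto simp: wf_seq_iff\<close>)
next
  case (FImp A B)
  have "lks_derivable L lok (add_mset (FImp A B) ({#A#} + {#}), {#} + {#B#})"
    by (rule lks_derivable_rule[OF lk_rule.impl[where G="{#A#}" and D="{#}" and G'="{#}" and D'="{#B#}"]])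
       (use FImp in \<open>auto simp: wf_seq_iff\<close>)
  then show ?case
    by (intro lks_derivable_rule[OF lk_rule.impr[where G="{#FImp A B#}" and D="{#}"]])
       (use FImp in \<open>auto simp: wf_seq_iff add_mset_commute\<close>)
next
  case (FAll x B)
  have "lks_derivable L lok ({#FAll x B#}, {#B#})"
    using lks_derivable_rule[OF lk_rule.alll[where t="TVar x" and x=x and A=B and G="{#}" and D="{#B#}"]]
      FAll by (auto simp: wf_seq_iff)
  then show ?case
    using lks_derivable_rule[OF lk_rule.allr[where a=x and x=x and A=B and G="{#FAll x B#}" and D="{#}"]]
      FAll by (auto simp: wf_seq_iff fv_seq_def)
next
  case (FEx x B)
  have "lks_derivable L lok ({#B#}, {#FEx x B#})"
    using lks_derivable_rule[OF lk_rule.exr[where t="TVar x" and x=x and A=B and G="{#B#}" and D="{#}"]]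
      FEx by (auto simp: wf_seq_iff)
  then show ?case
    using lks_derivable_rule[OF lk_rule.exl[where a=x and x=x and A=B and G="{#}" and D="{#FEx x B#}"]]
      FEx by (auto simp: wf_seq_iff fv_seq_def)
qed

lemma lks_derivable_weaken:
  assumes "lks_derivable L lok (G, D)" "wf_seq L (G + G', D + D')"
  shows "lks_derivable L lok (G + G', D + D')"
proof -
  have "lks_derivable L lok (G + G', D)"
    using assms
  proof (induction G' rule: multiset_induct)
    case (add A G')
    then show ?case
      using lks_derivable_rule[OF lk_rule.wl[where G="G + G'" and D=D and A=A]]
      by (auto simp: wf_seq_iff)
  qed simp
  then show ?thesis
    using assms(2)
  proof (induction D' rule: multiset_induct)
    case (add A D')
    then show ?case
      using lks_derivable_rule[OF lk_rule.wr[where G="G + G'" and D="D + D'" and A=A]]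
      by (auto simp: wf_seq_iff)
  qed simp
qed

lemma lks_derivable_contract_left:
  "lks_derivable L lok (G + G + X, Y) \<Longrightarrow> wf_seq L (G + X, Y) \<Longrightarrow> lks_derivable L lok (G + X, Y)"
proof (induction G arbitrary: X rule: multiset_induct)
  case (add A G)
  have "lks_derivable L lok (add_mset A (G + G + X), Y)"
    using lks_derivable_rule[OF lk_rule.cl[where G="G + G + X" and D=Y and A=A]] add.prems
    by (auto simp: wf_seq_iff)
  then show ?case
    using add.IH[of "add_mset A X"] add.prems by (auto simp: wf_seq_iff)
qed simp

lemma lks_derivable_contract_right:
  "lks_derivable L lok (Y, G + G + X) \<Longrightarrow> wf_seq L (Y, G + X) \<Longrightarrow> lks_derivable L lok (Y, G + X)"
proof (induction G arbitrary: X rule: multiset_induct)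
  case (add A G)
  have "lks_derivable L lok (Y, add_mset A (G + G + X))"
    using lks_derivable_rule[OF lk_rule.cr[where G=Y and D="G + G + X" and A=A]] add.prems
    by (auto simp: wf_seq_iff)
  then show ?case
    using add.IH[of "add_mset A X"] add.prems by (auto simp: wf_seq_iff)
qed simp

lemma lks_derivable_initial:
  assumes "wf_seq L (add_mset A G, add_mset A D)"
  shows "lks_derivable L lok (add_mset A G, add_mset A D)"
proof -
  have "lks_derivable L lok ({#A#}, {#A#})"
    by (rule lks_derivable_identity) (use assms in \<open>simp add: wf_seq_iff\<close>)
  from lks_derivable_weaken[OF this, of G D] assms show ?thesis
    by simp
qed

lemma lks_derivable_cut_contract:
  assumes "lks_derivable L lok (add_mset A0 G, add_mset A D)"
    and "lks_derivable L lok (add_mset A G, add_mset B D)"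
    and "wf_seq L (add_mset A0 G, add_mset B D)"
  shows "lks_derivable L lok (add_mset A0 G, add_mset B D)"
proof -
  have "lks_derivable L lok (add_mset A0 G + G, D + add_mset B D)"
    by (rule lks_derivable_rule[OF lk_rule.cut[where G="add_mset A0 G" and A=A and D=D and G'=G]])
       (use assms in \<open>auto simp: wf_seq_iff\<close>)
  then have "lks_derivable L lok (G + G + {#A0#}, D + add_mset B D)"
    by (simp add: add.commute add.left_commute)
  then have "lks_derivable L lok (G + {#A0#}, D + add_mset B D)"
    by (rule lks_derivable_contract_left) (use assms(3) in \<open>auto simp: wf_seq_iff\<close>)
  then have "lks_derivable L lok (G + {#A0#}, D + D + {#B#})"
    by (simp add: add.commute add.left_commute)
  then have "lks_derivable L lok (G + {#A0#}, D + {#B#})"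
    by (rule lks_derivable_contract_right) (use assms(3) in \<open>auto simp: wf_seq_iff\<close>)
  then show ?thesis
    by simp
qed

section \<open>The induction inferences of a proof\<close>

lemma ksimple_proof_subproof: "ksimple_proof L k (Inf C ps) \<Longrightarrow> p \<in> set ps \<Longrightarrow> ksimple_proof L k p"
  by (simp add: ksimple_proof_def)

lemma ksimple_proof_wf_seq: "ksimple_proof L k p \<Longrightarrow> wf_seq L (endseq p)"
  by (cases p) (auto simp: ksimple_proof_def)

fun ind_inferences :: "('f,'p,'x) lang_scheme \<Rightarrow> ('f,'p) ptree \<Rightarrow> ('f,'p) ptree list" where
  "ind_inferences L (Inf C ps) =
     (if lk_rule L (map endseq ps) C then [] else [Inf C ps]) @ concat (map (ind_inferences L) ps)"
| "ind_inferences L (Lnk j as C) = []"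

lemma ind_inferences_ksimple:
  assumes "N \<in> set (ind_inferences L T)" "ksimple_proof L k T"
  shows "ksimple_proof L k N \<and> (\<exists>C ps. N = Inf C ps \<and> \<not> lk_rule L (map endseq ps) C)"
  using assms
proof (induction T)
  case (Inf C ps)
  then consider "N = Inf C ps" "\<not> lk_rule L (map endseq ps) C" | p where "p \<in> set ps" "N \<in> set (ind_inferences L p)"
    by (auto split: if_splits)
  then show ?case
    by cases (use Inf in \<open>auto dest: ksimple_proof_subproof\<close>)
qed simp

lemma concat_eq_append_Cons:
  "concat xss = us @ x # vs \<Longrightarrow> \<exists>xs\<in>set xss. \<exists>ys zs rest. xs = ys @ x # zs \<and> vs = zs @ concat rest"
proof (induction xss arbitrary: us)
  case (Cons xs xss)
  then obtain w where "(xs = us @ w \<and> w @ concat xss = x # vs) \<or> (xs @ w = us \<and> concat xss = w @ x # vs)"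
    by (auto simp: append_eq_append_conv2)
  then show ?case
  proof
    assume "xs = us @ w \<and> w @ concat xss = x # vs"
    then show ?case
      using Cons.IH[of "[]"] by (cases w) fastforce+
  qed (use Cons.IH in fastforce)
qed simp

lemma ind_inferences_subproofs_follow:
  assumes "ind_inferences L T = us @ Inf C ps # vs" "\<not> lk_rule L (map endseq ps) C"
  shows "\<exists>ws. vs = concat (map (ind_inferences L) ps) @ ws"
  using assms
proof (induction T arbitrary: us vs)
  case (Inf C' ps')
  show ?case
  proof (cases "\<not> lk_rule L (map endseq ps') C' \<and> us = []")
    case False
    then have "concat (map (ind_inferences L) ps')
        = drop (if lk_rule L (map endseq ps') C' then 0 else 1) us @ Inf C ps # vs"
      using Inf.prems(1) by (cases us) (auto split: if_splits)
    from concat_eq_append_Cons[OF this] obtain p ys zs rest where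
      "p \<in> set ps'" "ind_inferences L p = ys @ Inf C ps # zs" "vs = zs @ concat rest"
      by auto
    with Inf.IH Inf.prems(2) show ?thesis
      by fastforce
  qed (use Inf.prems in auto)
qed simp

definition occurs_at :: "'a list \<Rightarrow> nat \<Rightarrow> 'a list \<Rightarrow> bool" where
  "occurs_at H i xs \<longleftrightarrow> (\<exists>us vs. H = us @ xs @ vs \<and> length us = i)"

lemma occurs_at_Cons_nth: "occurs_at H i (x # xs) \<Longrightarrow> i < length H \<and> H ! i = x"
  unfolding occurs_at_def by auto

lemma occurs_at_concat:
  assumes "occurs_at H i (concat xss)" "xs \<in> set xss"
  shows "\<exists>i'\<ge>i. occurs_at H i' xs"
proof -
  from assms(2) obtain as bs where "xss = as @ xs # bs"
    by (meson split_list)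
  moreover from assms(1) obtain us vs where "H = us @ concat xss @ vs" "length us = i"
    unfolding occurs_at_def by blast
  ultimately have "H = (us @ concat as) @ xs @ (concat bs @ vs)" "length (us @ concat as) \<ge> i"
    by auto
  then show ?thesis
    unfolding occurs_at_def by blast
qed

lemma occurs_at_Cons_Suc: "occurs_at H i xs \<Longrightarrow> occurs_at (x # H) (Suc i) xs"
  unfolding occurs_at_def by (metis append_Cons length_Cons)

lemma occurs_at_map: "occurs_at H i xs \<Longrightarrow> occurs_at (map f H) i (map f xs)"
  unfolding occurs_at_def by (metis length_map map_append)

lemma ind_inferences_subproofs_occur:
  assumes "m < length (ind_inferences L T)" "ind_inferences L T ! m = Inf C ps"
    and "\<not> lk_rule L (map endseq ps) C"
  shows "occurs_at (ind_inferences L T) (Suc m) (concat (map (ind_inferences L) ps))"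
proof -
  have "ind_inferences L T = take m (ind_inferences L T) @ Inf C ps # drop (Suc m) (ind_inferences L T)"
    using id_take_nth_drop[OF assms(1)] assms(2) by simp
  from ind_inferences_subproofs_follow[OF this assms(3)] obtain ws
    where "drop (Suc m) (ind_inferences L T) = concat (map (ind_inferences L) ps) @ ws" ..
  then have "ind_inferences L T
      = take (Suc m) (ind_inferences L T) @ concat (map (ind_inferences L) ps) @ ws"
    by (metis append_take_drop_id)
  then show ?thesis
    unfolding occurs_at_def using assms(1)
    by (intro exI[of _ "take (Suc m) (ind_inferences L T)"] exI[of _ ws]) simp
qed

definition ind_instance :: "('f,'p,'x) lang_scheme \<Rightarrow> var \<Rightarrow> 'f trm \<Rightarrow> ('f,'p) fm \<Rightarrow> ('f,'p) fm multiset
    \<Rightarrow> ('f,'p) fm multiset \<Rightarrow> ('f,'p) seq list \<Rightarrow> ('f,'p) seq \<Rightarrow> bool" where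
  "ind_instance L k t A G D Ps C \<longleftrightarrow> snd k = SOm \<and> wt L t SOm
    \<and> k \<notin> fv_seq (G, D) \<and> k \<notin> fvf (subf (TVar(k := TZero)) A)
    \<and> freefor (TVar(k := TSuc (TVar k))) A \<and> freefor (TVar(k := t)) A
    \<and> Ps = [(add_mset A G, add_mset (subf (TVar(k := TSuc (TVar k))) A) D)]
    \<and> C = (add_mset (subf (TVar(k := TZero)) A) G, add_mset (subf (TVar(k := t)) A) D)"

lemma ind_rule_iff_instance: "ind_rule L k t Ps C \<longleftrightarrow> (\<exists>A G D. ind_instance L k t A G D Ps C)"
  by (simp add: ind_rule_def ind_instance_def)

text \<open>The sequent \<open>A(0), \<Gamma> \<turnstile> \<Delta>, A(k)\<close> of an induction inference, read with \<open>k\<close> as the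
  parameter \<open>n\<close> of its proof symbol.\<close>
definition ind_seq :: "('f,'p) fm \<Rightarrow> var \<Rightarrow> ('f,'p) fm multiset \<Rightarrow> ('f,'p) fm multiset \<Rightarrow> ('f,'p) seq" where
  "ind_seq A k G D = (add_mset (subf (TVar(k := TZero)) A) G, add_mset A D)"

lemma subs_ind_seq:
  assumes "ind_instance L k t A G D Ps C"
  shows "subs (TVar(k := u)) (ind_seq A k G D)
    = (add_mset (subf (TVar(k := TZero)) A) G, add_mset (subf (TVar(k := u)) A) D)"
proof -
  have "\<forall>B\<in>#G + D. subf (TVar(k := u)) B = B"
    using assms by (auto simp: ind_instance_def fv_seq_def intro!: subf_id_on_fvf)
  moreover have "subf (TVar(k := u)) (subf (TVar(k := TZero)) A) = subf (TVar(k := TZero)) A"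
    using assms by (auto simp: ind_instance_def intro!: subf_id_on_fvf)
  ultimately show ?thesis
    by (simp add: ind_seq_def subs_def image_mset_subf_id)
qed

lemma freefor_seq_ind_seq:
  assumes "ind_instance L k t A G D Ps C" "freefor (TVar(k := u)) A"
  shows "freefor_seq (TVar(k := u)) (ind_seq A k G D)"
  using assms by (auto simp: ind_instance_def ind_seq_def freefor_seq_def fv_seq_def intro!: freefor_id_on_fvf)

fun premises_of :: "('f,'p) ptree \<Rightarrow> ('f,'p) seq list" where
  "premises_of (Inf C ps) = map endseq ps"
| "premises_of (Lnk j as C) = []"

definition ind_data :: "('f,'p,'x) lang_scheme \<Rightarrow> var \<Rightarrow> ('f,'p) ptree
    \<Rightarrow> 'f trm \<times> ('f,'p) fm \<times> ('f,'p) fm multiset \<times> ('f,'p) fm multiset" where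
  "ind_data L k N = (SOME (t, A, G, D). fvt t \<subseteq> {k}
      \<and> ind_instance L k t A G D (premises_of N) (endseq N))"

definition ind_header :: "('f,'p,'x) lang_scheme \<Rightarrow> var \<Rightarrow> ('f,'p) ptree \<Rightarrow> var list \<times> ('f,'p) seq" where
  "ind_header L k N = (case ind_data L k N of (t, A, G, D) \<Rightarrow>
      (k # var_list (fv_seq (ind_seq A k G D) - {k}), ind_seq A k G D))"

lemma ind_header_spec:
  assumes "ksimple_proof L k (Inf C ps)" "\<not> lk_rule L (map endseq ps) C"
  obtains t A G D xs where "fvt t \<subseteq> {k}" "ind_instance L k t A G D (map endseq ps) C"
    and "ind_header L k (Inf C ps) = (k # xs, ind_seq A k G D)"
    and "distinct (k # xs)" "fv_seq (ind_seq A k G D) \<subseteq> set (k # xs)"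
proof -
  from assms obtain t A G D where "fvt t \<subseteq> {k}" "ind_instance L k t A G D (map endseq ps) C"
    by (auto simp: ksimple_proof_def ind_rule_iff_instance)
  then have "\<exists>w. (case w of (t, A, G, D) \<Rightarrow> fvt t \<subseteq> {k} \<and> ind_instance L k t A G D (map endseq ps) C)"
    by (intro exI[of _ "(t, A, G, D)"]) simp
  from someI_ex[OF this] obtain t A G D where
    "ind_data L k (Inf C ps) = (t, A, G, D)" "fvt t \<subseteq> {k}" "ind_instance L k t A G D (map endseq ps) C"
    unfolding ind_data_def by (auto split: prod.splits)
  with var_list[of "fv_seq (ind_seq A k G D) - {k}"] show ?thesis
    by (intro that[of t A G D "var_list (fv_seq (ind_seq A k G D) - {k})"]) (auto simp: ind_header_def)
qed

text \<open>A header fixes the parameters and the sequent of one proof symbol of the schema under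
  construction; the proofs are chosen afterwards.\<close>
type_synonym ('f,'p) header = "var list \<times> ('f,'p) seq"

definition header_link_ok :: "('f,'p,'x) lang_scheme \<Rightarrow> ('f,'p) header list \<Rightarrow> nat \<Rightarrow> 'f trm list
    \<Rightarrow> ('f,'p) seq \<Rightarrow> bool" where
  "header_link_ok L H j as S' \<longleftrightarrow> j < length H
     \<and> list_all2 (\<lambda>a p. wt L a (snd p)) as (fst (H ! j))
     \<and> freefor_seq (subst_of (fst (H ! j)) as) (snd (H ! j))
     \<and> S' = subs (subst_of (fst (H ! j)) as) (snd (H ! j))"

lemma header_link_ok_param:
  assumes "j < length H" "H ! j = (n # xs, S)" "n \<notin> set xs" "wt L u (snd n)"
    and "freefor_seq (TVar(n := u)) S"
  shows "header_link_ok L H j (u # map TVar xs) (subs (TVar(n := u)) S)"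
  using assms wt_map_TVar[of L xs] by (simp add: header_link_ok_def subst_of_Cons_TVars)

definition base_links :: "('f,'p,'x) lang_scheme \<Rightarrow> var \<Rightarrow> ('f,'p) header list \<Rightarrow> nat
    \<Rightarrow> nat \<Rightarrow> 'f trm list \<Rightarrow> ('f,'p) seq \<Rightarrow> bool" where
  "base_links L k H i j as S' \<longleftrightarrow> i < j \<and> k_link k as \<and> header_link_ok L H j as S'"

definition step_links :: "('f,'p,'x) lang_scheme \<Rightarrow> var \<Rightarrow> ('f,'p) header list \<Rightarrow> nat
    \<Rightarrow> nat \<Rightarrow> 'f trm list \<Rightarrow> ('f,'p) seq \<Rightarrow> bool" where
  "step_links L k H i j as S' \<longleftrightarrow>
     ((j = i \<and> as \<noteq> [] \<and> hd as = TVar k) \<or> (i < j \<and> k_link k as)) \<and> header_link_ok L H j as S'"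

lemma base_links_imp_step_links: "base_links L k H i j as S' \<Longrightarrow> step_links L k H i j as S'"
  by (simp add: base_links_def step_links_def)

definition header_derivable :: "('f,'p,'x) lang_scheme \<Rightarrow> var \<Rightarrow> ('f,'p) header list \<Rightarrow> nat \<Rightarrow> bool" where
  "header_derivable L k H i \<longleftrightarrow> (let ps = fst (H ! i); S = snd (H ! i); n = hd ps in
     ps \<noteq> [] \<and> distinct ps \<and> snd n = SOm \<and> fv_seq S \<subseteq> set ps
     \<and> lks_derivable L (base_links L k H i) (subs (TVar(n := TZero)) S)
     \<and> freefor_seq (TVar(n := TSuc (TVar k))) S
     \<and> lks_derivable L (step_links L k H i) (subs (TVar(n := TSuc (TVar k))) S))"

lemma proof_schema_from_headers:
  assumes "H \<noteq> []" "snd k = SOm" "\<forall>i<length H. header_derivable L k H i"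
  shows "\<exists>\<Psi>. proof_schema L k \<Psi> \<and> schema_endseq \<Psi> = snd (H ! 0)"
proof -
  let ?n = "\<lambda>i. hd (fst (H ! i))"
  have "\<forall>i. \<exists>b. i < length H \<longrightarrow>
      lks_proof L (base_links L k H i) b \<and> endseq b = subs (TVar(?n i := TZero)) (snd (H ! i))"
    using assms(3) by (auto simp: header_derivable_def Let_def lks_derivable_def)
  then obtain base where base: "\<And>i. i < length H \<Longrightarrow>
      lks_proof L (base_links L k H i) (base i) \<and> endseq (base i) = subs (TVar(?n i := TZero)) (snd (H ! i))"
    by (metis choice)
  have "\<forall>i. \<exists>s. i < length H \<longrightarrow>
      lks_proof L (step_links L k H i) s \<and> endseq s = subs (TVar(?n i := TSuc (TVar k))) (snd (H ! i))"
    using assms(3) by (auto simp: header_derivable_def Let_def lks_derivable_def)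
  then obtain step where step: "\<And>i. i < length H \<Longrightarrow>
      lks_proof L (step_links L k H i) (step i) \<and> endseq (step i) = subs (TVar(?n i := TSuc (TVar k))) (snd (H ! i))"
    by (metis choice)
  define \<Psi> where "\<Psi> = map (\<lambda>i. (fst (H ! i), snd (H ! i), base i, step i)) [0..<length H]"
  have len: "length \<Psi> = length H"
    by (simp add: \<Psi>_def)
  have \<Psi>: "ps_params \<Psi> i = fst (H ! i)" "ps_seq \<Psi> i = snd (H ! i)"
    "ps_base \<Psi> i = base i" "ps_step \<Psi> i = step i" if "i < length H" for i
    using that by (simp_all add: \<Psi>_def ps_params_def ps_seq_def ps_base_def ps_step_def)
  have "link_ok L \<Psi> = header_link_ok L H"
    by (intro ext) (auto simp: link_ok_def header_link_ok_def len \<Psi>)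
  then have "pair_ok L k \<Psi> i" if "i < length H" for i
    using assms(3) base[OF that] step[OF that] that
    by (simp add: pair_ok_def header_derivable_def Let_def \<Psi> base_links_def[abs_def] step_links_def[abs_def])
  then show ?thesis
    using assms(1,2) len \<Psi>(2)[of 0] unfolding proof_schema_def schema_endseq_def
    by (intro exI[of _ \<Psi>]) auto
qed

section \<open>The translation of a \<open>k\<close>-simple proof\<close>

lemma lks_derivable_translation:
  assumes "ksimple_proof L k T" "occurs_at H (Suc i) (map (ind_header L k) (ind_inferences L T))"
  shows "lks_derivable L (base_links L k H i) (endseq T)"
  using assms
proof (induction T arbitrary: i)
  case (Inf C ps)
  show ?case
  proof (cases "lk_rule L (map endseq ps) C")
    case True
    have "lks_derivable L (base_links L k H i) (endseq p)" if p: "p \<in> set ps" for p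
    proof -
      from Inf.prems(2) True
      have "occurs_at H (Suc i) (concat (map (map (ind_header L k) \<circ> ind_inferences L) ps))"
        by (simp add: map_concat)
      from occurs_at_concat[OF this, of "map (ind_header L k) (ind_inferences L p)"] p obtain i'
        where "Suc i \<le> i'" "occurs_at H i' (map (ind_header L k) (ind_inferences L p))"
        by auto
      then obtain i'' where "i \<le> i''"
        and occ: "occurs_at H (Suc i'') (map (ind_header L k) (ind_inferences L p))"
        by (metis Suc_le_D Suc_le_mono)
      have "lks_derivable L (base_links L k H i'') (endseq p)"
        by (rule Inf.IH[OF p ksimple_proof_subproof[OF Inf.prems(1) p] occ])
      then show ?thesis
        by (rule lks_derivable_mono) (use \<open>i \<le> i''\<close> in \<open>auto simp: base_links_def\<close>)
    qed
    then show ?thesis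
      using lks_derivable_rule[OF True] ksimple_proof_wf_seq[OF Inf.prems(1)] by auto
  next
    case False
    from ind_header_spec[OF Inf.prems(1) False] obtain t A G D xs where hd:
      "fvt t \<subseteq> {k}" "ind_instance L k t A G D (map endseq ps) C"
      "ind_header L k (Inf C ps) = (k # xs, ind_seq A k G D)" "distinct (k # xs)" .
    from Inf.prems(2) False hd(3) have "Suc i < length H" "H ! Suc i = (k # xs, ind_seq A k G D)"
      using occurs_at_Cons_nth by fastforce+
    then have "header_link_ok L H (Suc i) (t # map TVar xs) (subs (TVar(k := t)) (ind_seq A k G D))"
      using hd(2,4) by (intro header_link_ok_param freefor_seq_ind_seq) (auto simp: ind_instance_def)
    moreover have "subs (TVar(k := t)) (ind_seq A k G D) = C"
      using subs_ind_seq[OF hd(2)] hd(2) by (simp add: ind_instance_def)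
    ultimately show ?thesis
      using ksimple_proof_wf_seq[OF Inf.prems(1)] hd(1)
      by (intro lks_derivable_link[where j="Suc i" and as="t # map TVar xs"])
         (auto simp: base_links_def k_link_def)
  qed
qed (simp add: ksimple_proof_def)

text \<open>The parameter \<open>n\<close> does not occur in the end-sequent, so its step case is the link
  \<open>\<psi>\<^sub>0(k, xs)\<close> itself.\<close>
lemma header_derivable_end_sequent:
  assumes "ksimple_proof L k \<pi>" "snd k = SOm"
    and "H = (n # xs, endseq \<pi>) # map (ind_header L k) (ind_inferences L \<pi>)"
    and "snd n = SOm" "distinct (n # xs)" "set xs = fv_seq (endseq \<pi>)"
  shows "header_derivable L k H 0"
proof -
  let ?S = "endseq \<pi>"
  have id: "subs (TVar(n := u)) ?S = ?S" "freefor_seq (TVar(n := u)) ?S" for u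
    using assms(5,6) by (auto intro!: subs_id_on_fv_seq freefor_seq_id_on_fv_seq)
  have "occurs_at H 1 (map (ind_header L k) (ind_inferences L \<pi>))"
    unfolding occurs_at_def assms(3) by (intro exI[of _ "[(n # xs, ?S)]"] exI[of _ "[]"]) simp
  then have base: "lks_derivable L (base_links L k H 0) ?S"
    using lks_derivable_translation[OF assms(1)] by simp
  have "header_link_ok L H 0 (TVar k # map TVar xs) (subs (TVar(n := TVar k)) ?S)"
    by (rule header_link_ok_param) (use assms id in auto)
  then have step: "lks_derivable L (step_links L k H 0) ?S"
    using ksimple_proof_wf_seq[OF assms(1)] id
    by (intro lks_derivable_link[where j=0]) (auto simp: step_links_def)
  show ?thesis
    using assms base step id unfolding header_derivable_def Let_def by auto
qed

lemma header_derivable_ind_inference: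
  assumes "ksimple_proof L k \<pi>" "snd k = SOm"
    and "H = h # map (ind_header L k) (ind_inferences L \<pi>)"
    and "m < length (ind_inferences L \<pi>)"
  shows "header_derivable L k H (Suc m)"
proof -
  from ind_inferences_ksimple[OF nth_mem[OF assms(4)] assms(1)] obtain C ps where
    N: "ksimple_proof L k (Inf C ps)" "ind_inferences L \<pi> ! m = Inf C ps" "\<not> lk_rule L (map endseq ps) C"
    by auto
  from ind_header_spec[OF N(1,3)] obtain t A G D xs where hd:
    "ind_instance L k t A G D (map endseq ps) C"
    "ind_header L k (Inf C ps) = (k # xs, ind_seq A k G D)"
    "distinct (k # xs)" "fv_seq (ind_seq A k G D) \<subseteq> set (k # xs)" .
  let ?S = "ind_seq A k G D"
  let ?A0 = "subf (TVar(k := TZero)) A" and ?A1 = "subf (TVar(k := TSuc (TVar k))) A"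
  from hd(1) obtain p where p: "ps = [p]" "endseq p = (add_mset A G, add_mset ?A1 D)"
    by (auto simp: ind_instance_def)
  have H: "Suc m < length H" "H ! Suc m = (k # xs, ?S)"
    using assms(3,4) N(2) hd(2) by auto
  have wf: "wf_seq L (add_mset ?A0 G, add_mset ?A1 D)"
    using ksimple_proof_wf_seq[OF N(1)] ksimple_proof_wf_seq[OF ksimple_proof_subproof[OF N(1)]] hd(1) p
    by (auto simp: ind_instance_def wf_seq_iff)
  have base: "lks_derivable L (base_links L k H (Suc m)) (subs (TVar(k := TZero)) ?S)"
    using wf by (auto simp: subs_ind_seq[OF hd(1)] wf_seq_iff intro!: lks_derivable_initial)
  have "header_link_ok L H (Suc m) (TVar k # map TVar xs) (subs (TVar(k := TVar k)) ?S)"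
    using H hd(3) assms(2) by (intro header_link_ok_param) auto
  then have link: "lks_derivable L (step_links L k H (Suc m)) (add_mset ?A0 G, add_mset A D)"
    using wf ksimple_proof_wf_seq[OF ksimple_proof_subproof[OF N(1)]] p
    by (intro lks_derivable_link[where j="Suc m" and as="TVar k # map TVar xs"])
       (auto simp: step_links_def ind_seq_def wf_seq_iff)
  have "occurs_at H (Suc (Suc m)) (map (ind_header L k) (ind_inferences L p))"
    using occurs_at_Cons_Suc[OF occurs_at_map[OF ind_inferences_subproofs_occur[OF assms(4) N(2,3)]]]
      assms(3) p by simp
  then have "lks_derivable L (base_links L k H (Suc m)) (add_mset A G, add_mset ?A1 D)"
    using lks_derivable_translation[OF ksimple_proof_subproof[OF N(1)]] p by auto
  then have "lks_derivable L (step_links L k H (Suc m)) (add_mset A G, add_mset ?A1 D)"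
    by (rule lks_derivable_mono) (rule base_links_imp_step_links)
  from lks_derivable_cut_contract[OF link this wf]
  have step: "lks_derivable L (step_links L k H (Suc m)) (subs (TVar(k := TSuc (TVar k))) ?S)"
    by (simp add: subs_ind_seq[OF hd(1)])
  show ?thesis
    using H hd assms(2) base step freefor_seq_ind_seq[OF hd(1)] hd(1)
    unfolding header_derivable_def Let_def by (auto simp: ind_instance_def)
qed

theorem mainTheorem6:
  fixes L :: "('f,'p) lang" and k :: var and \<pi> :: "('f,'p) ptree" and S :: "('f,'p) seq"
  assumes "wf_lang L"
    and "snd k = SOm"
    and "ksimple_proof L k \<pi>"
    and "endseq \<pi> = S"
  shows "\<exists>\<Psi>. proof_schema L k \<Psi> \<and> schema_endseq \<Psi> = S"
proof -
  obtain n where n: "snd n = SOm" "n \<notin> fv_seq S"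
    using ex_fresh_var[OF finite_fv_seq] by blast
  define xs where "xs = var_list (fv_seq S)"
  define H where "H = (n # xs, S) # map (ind_header L k) (ind_inferences L \<pi>)"
  have xs: "distinct (n # xs)" "set xs = fv_seq S"
    using var_list[OF finite_fv_seq, of S] n(2) by (auto simp: xs_def)
  have "header_derivable L k H i" if "i < length H" for i
  proof (cases i)
    case 0
    then show ?thesis
      using header_derivable_end_sequent[OF assms(3,2)] H_def assms(4) n xs by simp
  next
    case (Suc m)
    then show ?thesis
      using header_derivable_ind_inference[OF assms(3,2) H_def] that by (simp add: H_def)
  qed
  then show ?thesis
    using proof_schema_from_headers[of H k L] assms(2) by (simp add: H_def)
qed

end
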